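(* Let $n\ge2$, $F(a)=\prod_{i=1}^n(a-a_i)$ with distinct real $a_i$, and consider the superintegrable systems (integrals of degree $2n+1$) of the construction below with $\nu_n=1$ and $a>0$: $\mathcal{I}_{++}$: $x(a)=\frac a2+\frac1{\sqrt{a-a_1}}+\sum_{i=2}^n\frac{\xi_i}{\sqrt{a-a_i}}$, so that with $u=\sqrt a$, $g=(\mu^2du^2+dy^2)/u^2$, $\mu=1-\frac1{(u^2-a_1)^{3/2}}-\sum_{i=2}^n\frac{\xi_i}{(u^2-a_i)^{3/2}}$; $\mathcal{I}_{+-}$: $x(a)=\frac a2-\frac1{\sqrt{a-a_1}}-\sum_{i=2}^n\frac{\xi_i}{\sqrt{a-a_i}}$, so that $\mu=1+\frac1{(u^2-a_1)^{3/2}}+\sum_{i=2}^n\frac{\xi_i}{(u^2-a_i)^{3/2}}$. These systems (generalizing the cubic cases $\mathcal{I}_{+\pm}$ with $F=a-a_1$) are globally defined on $M\cong\mathbb{H}^2$ under the restrictions $\mathcal{I}_{++}$: $-\infty<a_i<a_1<-1$ ($i\ge2$), $\xi_i>0$, and $\frac1{|a_1|^{3/2}}+\sum_{i=2}^n\frac{\xi_i}{|a_i|^{3/2}}<1$; $\mathcal{I}_{+-}$: $-\infty<a_i<a_1<0$ ($i\ge2$), $\xi_i>0$.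
   Context: Construction (odd degree $2n+1$): $F=\sum_kA_ka^k=\prod_i(a-a_i)$, signs $\epsilon_i$, $\Delta_i=\epsilon_i(a-a_i)$, $x=\frac{\nu_n}2a+\sum_i\xi'_i\Delta_i^{-1/2}$ (here all $\epsilon_i=1$ and the coefficients $\xi'_i$ are read off from the displayed $x$) on the domain of $a>0$ where all $\Delta_i>0$; $H=\Pi^2+aP_y^2$, $\Pi=\frac a{\dot x}P_a$ (geodesic Hamiltonian of $g=\dot x^2a^{-2}da^2+a^{-1}dy^2$, $y\in\mathbb{R}$); $G=\sum_{k=0}^nA_{n-k}H^{n-k}P_y^{2k+1}$, $Q_1=\sum_{k=0}^n\tilde b_kH^{n-k}\Pi P_y^{2k}$, $Q_2=\sum_{k=0}^n\tilde c_kH^{n-k}P_y^{2k+1}$, $S_1=Q_1+yG$, $S_2=Q_2+yQ_1+\frac{y^2}2G$, with $\tilde b_k=(-1)^k(\nu_n\sigma_k+\sum_i\frac{\xi'_i}{\sqrt{\Delta_i}}\sigma^i_{k-1})$, $\tilde c_k=\frac{(-1)^{k+1}}2\{\nu_n^2a\sigma_k+2\nu_n\sum_i\frac{\xi'_i}{\sqrt{\Delta_i}}(\sigma^i_k+a\sigma^i_{k-1})+\sum_i\frac{\xi_i'^2}{\Delta_i}\sigma^i_{k-1}+\sum_{i\neq j}\frac{\xi'_i\xi'_j}{\sqrt{\Delta_i\Delta_j}}(\sigma^{ij}_{k-1}+a\sigma^{ij}_{k-2})\}$; $\sigma_k$ by $\prod_i(a-a_i)=\sum_k(-1)^k\sigma_ka^{n-k}$,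 $\sigma^i_m$ by $\prod_{l\ne i}(a-a_l)=\sum_{m=0}^{n-1}(-1)^m\sigma^i_ma^{n-1-m}$, $\sigma^i_{-1}=\sigma^i_n=0$, $\sigma^{ij}_m$ by $\prod_{l\ne i,j}(a-a_l)=\sum_{m=0}^{n-2}(-1)^m\sigma^{ij}_ma^{n-2-m}$, $\sigma^{ij}_{-2}=\sigma^{ij}_{-1}=\sigma^{ij}_{n-1}=\sigma^{ij}_n=0$. "Globally defined on $M\cong\mathbb{H}^2$": $g$ is a smooth Riemannian metric on the whole domain $M=\{u>0\}\times\mathbb{R}$, there is a smooth diffeomorphism $t=t(u)$ of $(0,\infty)$ onto $(0,\infty)$ with $g=\Phi(dt^2+dy^2)/t^2$, $\Phi$ smooth positive, and $S_1,S_2$ are smooth on $T^*M$. *)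

theory Defs
  imports "HOL-Analysis.Analysis" "HOL-Computational_Algebra.Polynomial"
begin

fun Ck_on :: "nat \<Rightarrow> 'a::euclidean_space set \<Rightarrow> ('a \<Rightarrow> real) \<Rightarrow> bool" where
  "Ck_on 0 S f = continuous_on S f"
| "Ck_on (Suc k) S f =
     (\<exists>f'. (\<forall>x\<in>S. (f has_derivative f' x) (at x)) \<and> (\<forall>i\<in>Basis. Ck_on k S (\<lambda>x. f' x i)))"

definition Cinf_on :: "'a::euclidean_space set \<Rightarrow> ('a \<Rightarrow> real) \<Rightarrow> bool" where
  "Cinf_on S f \<longleftrightarrow> (\<forall>k. Ck_on k S f)"

definition Fpoly :: "nat set \<Rightarrow> (nat \<Rightarrow> real) \<Rightarrow> real poly" where
  "Fpoly A r = (\<Prod>i\<in>A. [:- r i, 1:])"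

text \<open>sigma_k of the roots indexed by A, defined by
  prod_{i in A}(a - r i) = sum_k (-1)^k sigma_k a^(card A - k); zero for k outside 0..card A.\<close>
definition sig :: "nat set \<Rightarrow> (nat \<Rightarrow> real) \<Rightarrow> int \<Rightarrow> real" where
  "sig A r k = (if 0 \<le> k \<and> nat k \<le> card A
                then (-1) ^ nat k * coeff (Fpoly A r) (card A - nat k) else 0)"

text \<open>Construction data: degree parameter n (roots indexed by 1..n), roots r,
  coefficients c = xi', constant nu; all epsilon_i = 1, so Delta_i = a - r i.\<close>

definition xfun :: "real \<Rightarrow> nat \<Rightarrow> (nat \<Rightarrow> real) \<Rightarrow> (nat \<Rightarrow> real) \<Rightarrow> real \<Rightarrow> real" where
  "xfun \<nu> n r c a = \<nu> / 2 * a + (\<Sum>i\<in>{1..n}. c i / sqrt (a - r i))"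

definition btil :: "real \<Rightarrow> nat \<Rightarrow> (nat \<Rightarrow> real) \<Rightarrow> (nat \<Rightarrow> real) \<Rightarrow> nat \<Rightarrow> real \<Rightarrow> real" where
  "btil \<nu> n r c k a = (-1) ^ k *
     (\<nu> * sig {1..n} r (int k)
      + (\<Sum>i\<in>{1..n}. c i / sqrt (a - r i) * sig ({1..n} - {i}) r (int k - 1)))"

definition ctil :: "real \<Rightarrow> nat \<Rightarrow> (nat \<Rightarrow> real) \<Rightarrow> (nat \<Rightarrow> real) \<Rightarrow> nat \<Rightarrow> real \<Rightarrow> real" where
  "ctil \<nu> n r c k a = (-1) ^ (k + 1) / 2 *
     (\<nu>\<^sup>2 * a * sig {1..n} r (int k)
      + 2 * \<nu> * (\<Sum>i\<in>{1..n}. c i / sqrt (a - r i) *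
            (sig ({1..n} - {i}) r (int k) + a * sig ({1..n} - {i}) r (int k - 1)))
      + (\<Sum>i\<in>{1..n}. (c i)\<^sup>2 / (a - r i) * sig ({1..n} - {i}) r (int k - 1))
      + (\<Sum>i\<in>{1..n}. \<Sum>j\<in>{1..n} - {i}. c i * c j / sqrt ((a - r i) * (a - r j)) *
            (sig ({1..n} - {i, j}) r (int k - 1) + a * sig ({1..n} - {i, j}) r (int k - 2))))"

definition Pifun :: "real \<Rightarrow> nat \<Rightarrow> (nat \<Rightarrow> real) \<Rightarrow> (nat \<Rightarrow> real) \<Rightarrow> real \<Rightarrow> real \<Rightarrow> real" where
  "Pifun \<nu> n r c a Pa = a / deriv (xfun \<nu> n r c) a * Pa"

definition Hfun :: "real \<Rightarrow> nat \<Rightarrow> (nat \<Rightarrow> real) \<Rightarrow> (nat \<Rightarrow> real) \<Rightarrow> real \<Rightarrow> real \<Rightarrow> real \<Rightarrow> real" where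
  "Hfun \<nu> n r c a Pa Py = (Pifun \<nu> n r c a Pa)\<^sup>2 + a * Py\<^sup>2"

definition Gfun :: "real \<Rightarrow> nat \<Rightarrow> (nat \<Rightarrow> real) \<Rightarrow> (nat \<Rightarrow> real) \<Rightarrow> real \<Rightarrow> real \<Rightarrow> real \<Rightarrow> real" where
  "Gfun \<nu> n r c a Pa Py = (\<Sum>k\<in>{0..n}. coeff (Fpoly {1..n} r) (n - k)
       * (Hfun \<nu> n r c a Pa Py) ^ (n - k) * Py ^ (2 * k + 1))"

definition Q1fun :: "real \<Rightarrow> nat \<Rightarrow> (nat \<Rightarrow> real) \<Rightarrow> (nat \<Rightarrow> real) \<Rightarrow> real \<Rightarrow> real \<Rightarrow> real \<Rightarrow> real" where
  "Q1fun \<nu> n r c a Pa Py = (\<Sum>k\<in>{0..n}. btil \<nu> n r c k a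
       * (Hfun \<nu> n r c a Pa Py) ^ (n - k) * Pifun \<nu> n r c a Pa * Py ^ (2 * k))"

definition Q2fun :: "real \<Rightarrow> nat \<Rightarrow> (nat \<Rightarrow> real) \<Rightarrow> (nat \<Rightarrow> real) \<Rightarrow> real \<Rightarrow> real \<Rightarrow> real \<Rightarrow> real" where
  "Q2fun \<nu> n r c a Pa Py = (\<Sum>k\<in>{0..n}. ctil \<nu> n r c k a
       * (Hfun \<nu> n r c a Pa Py) ^ (n - k) * Py ^ (2 * k + 1))"

definition S1fun :: "real \<Rightarrow> nat \<Rightarrow> (nat \<Rightarrow> real) \<Rightarrow> (nat \<Rightarrow> real) \<Rightarrow> real \<times> real \<times> real \<times> real \<Rightarrow> real" where
  "S1fun \<nu> n r c = (\<lambda>(a, y, Pa, Py). Q1fun \<nu> n r c a Pa Py + y * Gfun \<nu> n r c a Pa Py)"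

definition S2fun :: "real \<Rightarrow> nat \<Rightarrow> (nat \<Rightarrow> real) \<Rightarrow> (nat \<Rightarrow> real) \<Rightarrow> real \<times> real \<times> real \<times> real \<Rightarrow> real" where
  "S2fun \<nu> n r c = (\<lambda>(a, y, Pa, Py). Q2fun \<nu> n r c a Pa Py + y * Q1fun \<nu> n r c a Pa Py
                       + y\<^sup>2 / 2 * Gfun \<nu> n r c a Pa Py)"

text \<open>Cotangent lift of the coordinate change a = u^2: (u, y, p_u, p_y) maps to
  (a, y, P_a, P_y) = (u^2, y, p_u / (2u), p_y).\<close>
definition lift_u :: "real \<times> real \<times> real \<times> real \<Rightarrow> real \<times> real \<times> real \<times> real" where
  "lift_u = (\<lambda>(u, y, pu, py). (u\<^sup>2, y, pu / (2 * u), py))"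

text \<open>Components of g = xdot^2 a^-2 da^2 + a^-1 dy^2 in the coordinates (u, y), a = u^2
  (the du dy component is 0).\<close>
definition g_uu :: "real \<Rightarrow> nat \<Rightarrow> (nat \<Rightarrow> real) \<Rightarrow> (nat \<Rightarrow> real) \<Rightarrow> real \<Rightarrow> real" where
  "g_uu \<nu> n r c u = (deriv (xfun \<nu> n r c) (u\<^sup>2))\<^sup>2 / (u\<^sup>2)\<^sup>2 * (2 * u)\<^sup>2"

definition g_yy :: "real \<Rightarrow> real" where
  "g_yy u = 1 / u\<^sup>2"

definition Mdom :: "(real \<times> real) set" where
  "Mdom = {p. fst p > 0}"

definition TMdom :: "(real \<times> real \<times> real \<times> real) set" where
  "TMdom = {p. fst p > 0}"

definition globally_defined :: "real \<Rightarrow> nat \<Rightarrow> (nat \<Rightarrow> real) \<Rightarrow> (nat \<Rightarrow> real) \<Rightarrow> bool" where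
  "globally_defined \<nu> n r c \<longleftrightarrow>
     \<comment> \<open>g is a smooth Riemannian metric on M\<close>
     Cinf_on Mdom (\<lambda>(u, y). g_uu \<nu> n r c u) \<and> Cinf_on Mdom (\<lambda>(u, y). g_yy u)
     \<and> (\<forall>u>0. g_uu \<nu> n r c u > 0 \<and> g_yy u > 0)
     \<comment> \<open>g = Phi (dt^2 + dy^2) / t^2 for a smooth diffeomorphism t of (0,oo)\<close>
     \<and> (\<exists>t \<Phi>. bij_betw t {0<..} {0<..} \<and> Cinf_on {0<..} t
           \<and> Cinf_on {0<..} (inv_into {0<..} t)
           \<and> Cinf_on Mdom \<Phi> \<and> (\<forall>p\<in>Mdom. \<Phi> p > 0)
           \<and> (\<forall>u y. u > 0 \<longrightarrow>
                 g_uu \<nu> n r c u = \<Phi> (u, y) * (deriv t u)\<^sup>2 / (t u)\<^sup>2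
               \<and> g_yy u = \<Phi> (u, y) / (t u)\<^sup>2))
     \<comment> \<open>S_1, S_2 smooth on T*M\<close>
     \<and> Cinf_on TMdom (S1fun \<nu> n r c \<circ> lift_u)
     \<and> Cinf_on TMdom (S2fun \<nu> n r c \<circ> lift_u)"

end

theory Submission
  imports Defs
begin

text \<open>With \<open>a = u\<^sup>2\<close> the metric reads \<open>g = (\<mu>\<^sup>2 du\<^sup>2 + dy\<^sup>2) / u\<^sup>2\<close> with
  \<open>\<mu>(u) = 2 x'(u\<^sup>2) = 1 - \<Sum>\<^sub>i \<xi>\<^sub>i / (u\<^sup>2 - a\<^sub>i)\<^bsup>3/2\<^esup>\<close>. When all roots \<open>a\<^sub>i\<close> are negative,
  every term of \<open>x\<close>, of the metric and of the integrals is smooth for \<open>u > 0\<close>. If moreover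
  \<open>K\<^sub>+ = \<Sum>\<^sub>i \<xi>\<^sub>i\<^sup>+ / |a\<^sub>i|\<^bsup>3/2\<^esup> < 1\<close>, then \<open>\<mu> \<ge> 1 - K\<^sub>+ > 0\<close>, and the primitive \<open>t\<close> of \<open>\<mu>\<close> with
  \<open>t(0) = 0\<close> satisfies \<open>(1 - K\<^sub>+) u \<le> t(u) \<le> (1 + K\<^sub>-) u\<close>. Hence \<open>t\<close> is a diffeomorphism of
  \<open>(0,\<infinity>)\<close> and \<open>g = (t/u)\<^sup>2 (dt\<^sup>2 + dy\<^sup>2) / t\<^sup>2\<close>. Both sign patterns of the proposition meet this
  criterion; for \<open>I\<^sub>+\<^sub>-\<close> the positive part \<open>K\<^sub>+\<close> vanishes.\<close>

section \<open>Smooth real functions\<close>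

lemma Ck_Suc_real_iff:
  fixes f :: "real \<Rightarrow> real"
  shows "Ck_on (Suc k) U f \<longleftrightarrow>
           (\<exists>f'. (\<forall>x\<in>U. (f has_real_derivative f' x) (at x)) \<and> Ck_on k U f')"
proof
  assume "Ck_on (Suc k) U f"
  then obtain D where D: "\<forall>x\<in>U. (f has_derivative D x) (at x)" and CD: "Ck_on k U (\<lambda>x. D x 1)"
    by (auto simp: Basis_real_def)
  have "D x = (*) (D x 1)" if "x \<in> U" for x
  proof
    fix h :: real
    have "linear (D x)" using D that has_derivative_linear by blast
    then show "D x h = D x 1 * h" using linear_scale_real[of "D x" h 1] by simp
  qed
  then have "\<forall>x\<in>U. (f has_real_derivative D x 1) (at x)"
    using D by (simp add: has_field_derivative_def)
  with CD show "\<exists>f'. (\<forall>x\<in>U. (f has_real_derivative f' x) (at x)) \<and> Ck_on k U f'"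
    by (intro exI[of _ "\<lambda>x. D x 1"] conjI)
next
  assume "\<exists>f'. (\<forall>x\<in>U. (f has_real_derivative f' x) (at x)) \<and> Ck_on k U f'"
  then obtain f' where "\<forall>x\<in>U. (f has_derivative (*) (f' x)) (at x)" "Ck_on k U f'"
    by (auto simp: has_field_derivative_def)
  then show "Ck_on (Suc k) U f" by (auto simp: Basis_real_def intro!: exI[of _ "\<lambda>x. (*) (f' x)"])
qed

lemma Ck_Suc_imp_Ck: "Ck_on (Suc k) S f \<Longrightarrow> Ck_on k S f"
proof (induction k arbitrary: f)
  case 0
  then obtain f' where "\<forall>x\<in>S. (f has_derivative f' x) (at x)" by auto
  then show ?case by (auto intro: continuous_at_imp_continuous_on has_derivative_continuous)
next
  case (Suc k)
  then show ?case by auto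
qed

lemma Ck_const: "Ck_on k S (\<lambda>x. c)"
  by (induction k arbitrary: c) (auto intro!: exI[of _ "\<lambda>x h. 0"])

lemma Ck_linear: "bounded_linear L \<Longrightarrow> Ck_on k S (L :: 'a::euclidean_space \<Rightarrow> real)"
  by (cases k)
    (auto simp: linear_continuous_on bounded_linear_imp_has_derivative
      intro!: exI[of _ "\<lambda>x. L"] Ck_const)

lemma Ck_add: "Ck_on k S f \<Longrightarrow> Ck_on k S g \<Longrightarrow> Ck_on k S (\<lambda>x. f x + g x)"
proof (induction k arbitrary: f g)
  case 0
  then show ?case by (auto intro: continuous_on_add)
next
  case (Suc k)
  from Suc.prems obtain f' g' where
    df: "\<forall>x\<in>S. (f has_derivative f' x) (at x)" "\<forall>i\<in>Basis. Ck_on k S (\<lambda>x. f' x i)" and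
    dg: "\<forall>x\<in>S. (g has_derivative g' x) (at x)" "\<forall>i\<in>Basis. Ck_on k S (\<lambda>x. g' x i)"
    by auto
  then show ?case
    by (auto intro!: exI[of _ "\<lambda>x h. f' x h + g' x h"] has_derivative_add Suc.IH)
qed

lemma Ck_mult: "Ck_on k S f \<Longrightarrow> Ck_on k S g \<Longrightarrow> Ck_on k S (\<lambda>x. f x * g x)"
proof (induction k arbitrary: f g)
  case 0
  then show ?case by (auto intro: continuous_on_mult)
next
  case (Suc k)
  from Suc.prems obtain f' g' where
    df: "\<forall>x\<in>S. (f has_derivative f' x) (at x)" "\<forall>i\<in>Basis. Ck_on k S (\<lambda>x. f' x i)" and
    dg: "\<forall>x\<in>S. (g has_derivative g' x) (at x)" "\<forall>i\<in>Basis. Ck_on k S (\<lambda>x. g' x i)"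
    by auto
  have "Ck_on k S f" "Ck_on k S g" using Suc.prems Ck_Suc_imp_Ck by blast+
  with df dg show ?case
    by (auto intro!: exI[of _ "\<lambda>x h. f x * g' x h + f' x h * g x"] has_derivative_mult
        Ck_add Suc.IH)
qed

lemma Ck_compose:
  fixes f :: "real \<Rightarrow> real" and h :: "'a::euclidean_space \<Rightarrow> real"
  assumes "Ck_on k U f" "Ck_on k S h" "\<And>x. x \<in> S \<Longrightarrow> h x \<in> U"
  shows "Ck_on k S (\<lambda>x. f (h x))"
  using assms
proof (induction k arbitrary: f h)
  case 0
  then show ?case by (auto intro: continuous_on_compose2)
next
  case (Suc k)
  from Suc.prems(1)[unfolded Ck_Suc_real_iff] obtain f' where
    df: "\<forall>y\<in>U. (f has_derivative (*) (f' y)) (at y)" and Cf': "Ck_on k U f'"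
    by (auto simp: has_field_derivative_def)
  from Suc.prems(2) obtain h' where
    dh: "\<forall>x\<in>S. (h has_derivative h' x) (at x)" and Ch': "\<forall>i\<in>Basis. Ck_on k S (\<lambda>x. h' x i)"
    by auto
  have "((\<lambda>x. f (h x)) has_derivative (\<lambda>v. f' (h x) * h' x v)) (at x)" if "x \<in> S" for x
    using diff_chain_at[of h "h' x" x f "(*) (f' (h x))"] dh df Suc.prems(3) that
    by (simp add: o_def)
  moreover have "Ck_on k S (\<lambda>x. f' (h x))"
    using Suc.IH[OF Cf' Ck_Suc_imp_Ck[OF Suc.prems(2)]] Suc.prems(3) .
  ultimately show ?case
    using Ch' by (auto intro!: exI[of _ "\<lambda>x v. f' (h x) * h' x v"] Ck_mult)
qed

lemma Ck_powr: "Ck_on k {0<..} (\<lambda>s::real. s powr a)"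
proof (induction k arbitrary: a)
  case 0
  then show ?case by (auto intro!: continuous_on_powr')
next
  case (Suc k)
  have "\<forall>s\<in>{0<..}. ((\<lambda>s::real. s powr a) has_real_derivative a * s powr (a - 1)) (at s)"
    by (auto intro!: has_real_derivative_powr)
  then show ?case
    unfolding Ck_Suc_real_iff by (intro exI[of _ "\<lambda>s. a * s powr (a - 1)"] conjI Ck_mult Ck_const Suc.IH)
qed

lemma Ck_cong:
  assumes "open S" "\<And>x. x \<in> S \<Longrightarrow> f x = g x" "Ck_on k S f"
  shows "Ck_on k S g"
proof (cases k)
  case 0
  then show ?thesis using assms by (auto cong: continuous_on_cong)
next
  case (Suc m)
  then show ?thesis
    using assms by (auto intro: has_derivative_transform_within_open)
qed

lemma Cinf_const: "Cinf_on S (\<lambda>x. c)"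
  by (simp add: Cinf_on_def Ck_const)

lemma Cinf_linear: "bounded_linear L \<Longrightarrow> Cinf_on S (L :: 'a::euclidean_space \<Rightarrow> real)"
  by (simp add: Cinf_on_def Ck_linear)

lemma Cinf_add: "Cinf_on S f \<Longrightarrow> Cinf_on S g \<Longrightarrow> Cinf_on S (\<lambda>x. f x + g x)"
  by (simp add: Cinf_on_def Ck_add)

lemma Cinf_mult: "Cinf_on S f \<Longrightarrow> Cinf_on S g \<Longrightarrow> Cinf_on S (\<lambda>x. f x * g x)"
  by (simp add: Cinf_on_def Ck_mult)

lemma Cinf_uminus: "Cinf_on S f \<Longrightarrow> Cinf_on S (\<lambda>x. - f x)"
  using Cinf_mult[OF Cinf_const[of S "-1"]] by simp

lemma Cinf_diff: "Cinf_on S f \<Longrightarrow> Cinf_on S g \<Longrightarrow> Cinf_on S (\<lambda>x. f x - g x)"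
  using Cinf_add[OF _ Cinf_uminus] by simp

lemma Cinf_sum:
  "finite A \<Longrightarrow> (\<And>i. i \<in> A \<Longrightarrow> Cinf_on S (f i)) \<Longrightarrow> Cinf_on S (\<lambda>x. \<Sum>i\<in>A. f i x)"
  by (induction A rule: finite_induct) (auto intro: Cinf_const Cinf_add)

lemma Cinf_power: "Cinf_on S f \<Longrightarrow> Cinf_on S (\<lambda>x. f x ^ m)"
  by (induction m) (auto intro: Cinf_const Cinf_mult)

lemma Cinf_cong: "open S \<Longrightarrow> (\<And>x. x \<in> S \<Longrightarrow> f x = g x) \<Longrightarrow> Cinf_on S f \<Longrightarrow> Cinf_on S g"
  unfolding Cinf_on_def by (metis Ck_cong)

lemma Cinf_compose:
  fixes f :: "real \<Rightarrow> real" and h :: "'a::euclidean_space \<Rightarrow> real"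
  shows "Cinf_on U f \<Longrightarrow> Cinf_on S h \<Longrightarrow> (\<And>x. x \<in> S \<Longrightarrow> h x \<in> U) \<Longrightarrow> Cinf_on S (\<lambda>x. f (h x))"
  unfolding Cinf_on_def using Ck_compose by blast

lemma Cinf_powr: "Cinf_on S h \<Longrightarrow> (\<And>x. x \<in> S \<Longrightarrow> 0 < h x) \<Longrightarrow> Cinf_on S (\<lambda>x. h x powr a)"
  by (rule Cinf_compose[where U="{0<..}"]) (auto simp: Cinf_on_def Ck_powr)

lemma Cinf_sqrt:
  assumes "open S" "Cinf_on S h" "\<And>x. x \<in> S \<Longrightarrow> 0 < h x"
  shows "Cinf_on S (\<lambda>x. sqrt (h x))"
proof (rule Cinf_cong[OF \<open>open S\<close>])
  show "Cinf_on S (\<lambda>x. h x powr (1/2))" using assms(2,3) by (rule Cinf_powr)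
qed (use assms(3) in \<open>simp add: powr_half_sqrt less_imp_le\<close>)

lemma Cinf_divide:
  assumes "open S" "Cinf_on S f" "Cinf_on S g" "\<And>x. x \<in> S \<Longrightarrow> 0 < g x"
  shows "Cinf_on S (\<lambda>x. f x / g x)"
proof (rule Cinf_cong[OF \<open>open S\<close>])
  show "Cinf_on S (\<lambda>x. f x * g x powr -1)" using assms(2) Cinf_powr[OF assms(3,4)] by (rule Cinf_mult)
qed (simp add: assms(4) abs_of_pos powr_minus_divide divide_inverse)

lemmas Cinf_intros = Cinf_const Cinf_add Cinf_diff Cinf_mult Cinf_uminus Cinf_sum Cinf_power
  Cinf_divide Cinf_sqrt

lemma Cinf_inv_into:
  fixes t t' :: "real \<Rightarrow> real"
  assumes "open S" "open T" and bij: "bij_betw t S T"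
    and deriv: "\<And>u. u \<in> S \<Longrightarrow> (t has_real_derivative t' u) (at u)"
    and "Cinf_on S t'" and t'_pos: "\<And>u. u \<in> S \<Longrightarrow> 0 < t' u"
  shows "Cinf_on T (inv_into S t)"
proof -
  define g where "g = inv_into S t"
  have g_in: "g y \<in> S" and t_g: "t (g y) = y" if "y \<in> T" for y
    using that bij unfolding g_def
    by (auto simp: bij_betw_def inv_into_into f_inv_into_f)
  have g_t: "g (t x) = x" if "x \<in> S" for x
    using that bij unfolding g_def by (simp add: bij_betw_def)
  have g_cont: "isCont g y" if y: "y \<in> T" for y
  proof -
    obtain d where d: "0 < d" "cball (g y) d \<subseteq> S"
      using g_in[OF y] \<open>open S\<close> open_contains_cball by blast
    then have near: "\<And>z. \<bar>z - g y\<bar> \<le> d \<Longrightarrow> z \<in> S"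
      by (auto simp: dist_real_def abs_minus_commute)
    have "isCont g (t (g y))"
      by (rule isCont_inverse_function[OF d(1) g_t[OF near] DERIV_isCont[OF deriv[OF near]]])
    then show ?thesis using t_g[OF y] by simp
  qed
  have g_deriv: "(g has_real_derivative inverse (t' (g y))) (at y)" if y: "y \<in> T" for y
  proof -
    obtain e where e: "0 < e" "ball y e \<subseteq> T"
      using y \<open>open T\<close> open_contains_ball by blast
    then have near: "\<And>z. y - e < z \<Longrightarrow> z < y + e \<Longrightarrow> z \<in> T"
      by (auto simp: dist_real_def subset_eq)
    have "t' (g y) \<noteq> 0" using t'_pos[OF g_in[OF y]] by simp
    moreover have "y - e < y" "y < y + e" using e(1) by simp_all
    ultimately show ?thesis
      using DERIV_inverse_function[OF deriv[OF g_in[OF y]] _ _ _ t_g[OF near] g_cont[OF y]]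
      by blast
  qed
  have "Cinf_on S (\<lambda>u. 1 / t' u)"
    using assms by (intro Cinf_divide Cinf_const) auto
  then have Ck_inv_t': "Ck_on k S (\<lambda>u. inverse (t' u))" for k
    by (simp add: Cinf_on_def inverse_eq_divide)
  have "Ck_on k T g" for k
  proof (induction k)
    case 0
    then show ?case by (simp add: continuous_at_imp_continuous_on g_cont)
  next
    case (Suc k)
    have "Ck_on k T (\<lambda>y. inverse (t' (g y)))"
      using Ck_inv_t' Suc.IH g_in by (rule Ck_compose)
    with g_deriv show ?case
      unfolding Ck_Suc_real_iff by (intro exI[of _ "\<lambda>y. inverse (t' (g y))"]) simp
  qed
  then show ?thesis by (simp add: Cinf_on_def g_def)
qed

lemma bij_betw_pos_reals_if_linearly_bounded:
  fixes t :: "real \<Rightarrow> real"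
  assumes mono: "strict_mono_on {0<..} t" and cont: "continuous_on {0<..} t"
    and "0 < m" and bounds: "\<And>u. 0 < u \<Longrightarrow> m * u \<le> t u \<and> t u \<le> M * u"
  shows "bij_betw t {0<..} {0<..}"
  unfolding bij_betw_def
proof
  show "inj_on t {0<..}" using mono by (rule strict_mono_on_imp_inj_on)
  show "t ` {0<..} = {0<..}"
  proof
    show "t ` {0<..} \<subseteq> {0<..}"
      using bounds \<open>0 < m\<close> by (force intro: less_le_trans[OF mult_pos_pos])
    show "{0<..} \<subseteq> t ` {0<..}"
    proof
      fix v :: real assume "v \<in> {0<..}"
      then have v: "0 < v" by simp
      have "m \<le> M" using bounds[of 1] by simp
      then have M: "0 < M" using \<open>0 < m\<close> by linarith
      define u\<^sub>1 u\<^sub>2 where "u\<^sub>1 = v / M" and "u\<^sub>2 = v / m"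
      have u\<^sub>1: "0 < u\<^sub>1" and u\<^sub>2: "0 < u\<^sub>2" using v M \<open>0 < m\<close> by (simp_all add: u\<^sub>1_def u\<^sub>2_def)
      have "t u\<^sub>1 \<le> v" using bounds[OF u\<^sub>1] M by (simp add: u\<^sub>1_def)
      moreover have "v \<le> t u\<^sub>2" using bounds[OF u\<^sub>2] \<open>0 < m\<close> by (simp add: u\<^sub>2_def)
      moreover have "u\<^sub>1 \<le> u\<^sub>2"
        unfolding u\<^sub>1_def u\<^sub>2_def using v \<open>0 < m\<close> \<open>m \<le> M\<close> by (intro divide_left_mono) auto
      moreover have "continuous_on {u\<^sub>1..u\<^sub>2} t"
        using cont by (rule continuous_on_subset) (use u\<^sub>1 in auto)
      ultimately obtain u where "u\<^sub>1 \<le> u" "t u = v" using IVT' by blast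
      then show "v \<in> t ` {0<..}" using u\<^sub>1 by force
    qed
  qed
qed

section \<open>The metric and the integrals for negative roots\<close>

lemma has_real_derivative_div_sqrt_shift:
  fixes r a c :: real
  assumes "r < a"
  shows "((\<lambda>a. c / sqrt (a - r)) has_real_derivative - (c / (2 * ((a - r) * sqrt (a - r))))) (at a)"
  using assms by (auto intro!: derivative_eq_intros simp: field_simps)

lemma has_real_derivative_div_sqrt_sq_shift:
  fixes r u :: real
  assumes "r < u\<^sup>2"
  shows "((\<lambda>u. u / sqrt (u\<^sup>2 - r)) has_real_derivative - r / ((u\<^sup>2 - r) * sqrt (u\<^sup>2 - r))) (at u)"
proof -
  have "sqrt (u\<^sup>2 - r) * sqrt (u\<^sup>2 - r) = u\<^sup>2 - r" using assms by simp
  then show ?thesis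
    using assms by (auto intro!: derivative_eq_intros simp: field_simps power2_eq_square)
qed

definition xdot :: "nat \<Rightarrow> (nat \<Rightarrow> real) \<Rightarrow> (nat \<Rightarrow> real) \<Rightarrow> real \<Rightarrow> real" where
  "xdot n r c a = 1/2 - (\<Sum>i\<in>{1..n}. c i / (2 * ((a - r i) * sqrt (a - r i))))"

definition mu :: "nat \<Rightarrow> (nat \<Rightarrow> real) \<Rightarrow> (nat \<Rightarrow> real) \<Rightarrow> real \<Rightarrow> real" where
  "mu n r c u = 1 - (\<Sum>i\<in>{1..n}. c i / ((u\<^sup>2 - r i) * sqrt (u\<^sup>2 - r i)))"

text \<open>The conformal coordinate \<open>t\<close>: the primitive of \<open>mu\<close> vanishing at \<open>0\<close>.\<close>

definition tconf :: "nat \<Rightarrow> (nat \<Rightarrow> real) \<Rightarrow> (nat \<Rightarrow> real) \<Rightarrow> real \<Rightarrow> real" where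
  "tconf n r c u = u - (\<Sum>i\<in>{1..n}. c i / (- r i) * (u / sqrt (u\<^sup>2 - r i)))"

lemma has_real_derivative_xfun:
  assumes "\<forall>i\<in>{1..n}. r i < a"
  shows "(xfun 1 n r c has_real_derivative xdot n r c a) (at a)"
proof -
  have "((\<lambda>a. 1 / 2 * a + (\<Sum>i\<in>{1..n}. c i / sqrt (a - r i))) has_real_derivative
      1 / 2 * 1 + (\<Sum>i\<in>{1..n}. - (c i / (2 * ((a - r i) * sqrt (a - r i)))))) (at a)"
    using assms
    by (intro DERIV_add DERIV_cmult DERIV_ident DERIV_sum has_real_derivative_div_sqrt_shift) auto
  then show ?thesis by (simp add: xfun_def[abs_def] xdot_def sum_negf)
qed

lemma deriv_xfun: "\<forall>i\<in>{1..n}. r i < a \<Longrightarrow> deriv (xfun 1 n r c) a = xdot n r c a"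
  by (rule DERIV_imp_deriv[OF has_real_derivative_xfun])

lemma mu_eq_xdot: "mu n r c u = 2 * xdot n r c (u\<^sup>2)"
  by (simp add: mu_def xdot_def right_diff_distrib sum_distrib_left)

lemma has_real_derivative_tconf:
  assumes "\<forall>i\<in>{1..n}. r i < 0"
  shows "(tconf n r c has_real_derivative mu n r c u) (at u)"
proof -
  have pos: "r i < u\<^sup>2" if "i \<in> {1..n}" for i
    using assms that by (smt (verit) zero_le_power2)
  have "(tconf n r c has_real_derivative
      1 - (\<Sum>i\<in>{1..n}. c i / (- r i) * (- r i / ((u\<^sup>2 - r i) * sqrt (u\<^sup>2 - r i))))) (at u)"
    unfolding tconf_def[abs_def] using pos
    by (intro DERIV_diff DERIV_ident DERIV_sum DERIV_cmult has_real_derivative_div_sqrt_sq_shift)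
  moreover have "(\<Sum>i\<in>{1..n}. c i / (- r i) * (- r i / ((u\<^sup>2 - r i) * sqrt (u\<^sup>2 - r i))))
      = (\<Sum>i\<in>{1..n}. c i / ((u\<^sup>2 - r i) * sqrt (u\<^sup>2 - r i)))"
    by (intro sum.cong refl) (use assms in fastforce)
  ultimately show ?thesis by (simp only: mu_def)
qed

lemma tconf_eq_mult:
  "tconf n r c u = u * (1 - (\<Sum>i\<in>{1..n}. c i / ((- r i) * sqrt (u\<^sup>2 - r i))))"
  by (simp add: tconf_def right_diff_distrib sum_distrib_left mult.commute)

context
  fixes n :: nat and r c :: "nat \<Rightarrow> real" and S :: "'a::euclidean_space set" and A :: "'a \<Rightarrow> real"
  assumes roots_neg: "\<forall>i\<in>{1..n}. r i < 0"
    and xdot_pos: "\<forall>a>0. 0 < xdot n r c a"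
    and "open S" and "Cinf_on S A" and A_pos: "\<forall>x\<in>S. 0 < A x"
begin

lemma A_minus_root_pos: "x \<in> S \<Longrightarrow> i \<in> {1..n} \<Longrightarrow> 0 < A x - r i"
  using roots_neg A_pos by (metis diff_gt_0_iff_gt less_trans)

lemma Cinf_Pifun:
  assumes "Cinf_on S P"
  shows "Cinf_on S (\<lambda>x. Pifun 1 n r c (A x) (P x))"
proof (rule Cinf_cong[OF \<open>open S\<close>])
  show "Cinf_on S (\<lambda>x. A x / xdot n r c (A x) * P x)"
    unfolding xdot_def using assms \<open>open S\<close> \<open>Cinf_on S A\<close> A_minus_root_pos xdot_pos A_pos
    by (intro Cinf_intros) (auto simp: xdot_def)
  show "A x / xdot n r c (A x) * P x = Pifun 1 n r c (A x) (P x)" if "x \<in> S" for x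
    using A_minus_root_pos[OF that] by (simp add: Pifun_def deriv_xfun)
qed

lemma Cinf_Hfun:
  "Cinf_on S P \<Longrightarrow> Cinf_on S Q \<Longrightarrow> Cinf_on S (\<lambda>x. Hfun 1 n r c (A x) (P x) (Q x))"
  unfolding Hfun_def by (intro Cinf_intros Cinf_Pifun \<open>Cinf_on S A\<close>)

lemma Cinf_Gfun:
  "Cinf_on S P \<Longrightarrow> Cinf_on S Q \<Longrightarrow> Cinf_on S (\<lambda>x. Gfun 1 n r c (A x) (P x) (Q x))"
  unfolding Gfun_def by (intro Cinf_intros Cinf_Hfun) auto

lemma Cinf_Q1fun:
  "Cinf_on S P \<Longrightarrow> Cinf_on S Q \<Longrightarrow> Cinf_on S (\<lambda>x. Q1fun 1 n r c (A x) (P x) (Q x))"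
  unfolding Q1fun_def btil_def
  using \<open>open S\<close> \<open>Cinf_on S A\<close> A_minus_root_pos
  by (intro Cinf_intros Cinf_Hfun Cinf_Pifun) auto

lemma Cinf_Q2fun:
  "Cinf_on S P \<Longrightarrow> Cinf_on S Q \<Longrightarrow> Cinf_on S (\<lambda>x. Q2fun 1 n r c (A x) (P x) (Q x))"
  unfolding Q2fun_def ctil_def
  using \<open>open S\<close> \<open>Cinf_on S A\<close> A_minus_root_pos
  by (intro Cinf_intros Cinf_Hfun) (auto intro!: mult_pos_pos)

end

lemma open_Mdom: "open Mdom"
  unfolding Mdom_def by (simp add: open_Collect_less continuous_on_fst)

lemma open_TMdom: "open TMdom"
  unfolding TMdom_def by (simp add: open_Collect_less continuous_on_fst)

context
  fixes n :: nat and r c :: "nat \<Rightarrow> real"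
  assumes roots_neg: "\<forall>i\<in>{1..n}. r i < 0"
    and mu_pos: "\<forall>u>0. 0 < mu n r c u"
begin

lemma sq_minus_root_pos: "i \<in> {1..n} \<Longrightarrow> 0 < u\<^sup>2 - r i"
  using roots_neg by (smt (verit) zero_le_power2)

lemma xdot_pos: "\<forall>a>0. 0 < xdot n r c a"
  using mu_pos by (auto simp: mu_eq_xdot dest: spec[of _ "sqrt _"])

lemma g_uu_eq: "0 < u \<Longrightarrow> g_uu 1 n r c u = (mu n r c u)\<^sup>2 / u\<^sup>2"
  using sq_minus_root_pos[of _ u]
  by (simp add: g_uu_def deriv_xfun mu_eq_xdot field_simps power2_eq_square)

lemma Cinf_mu: "open S \<Longrightarrow> Cinf_on S h \<Longrightarrow> Cinf_on S (\<lambda>x. mu n r c (h x))"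
  unfolding mu_def using sq_minus_root_pos by (intro Cinf_intros) (auto intro!: mult_pos_pos)

lemma Cinf_tconf: "open S \<Longrightarrow> Cinf_on S h \<Longrightarrow> Cinf_on S (\<lambda>x. tconf n r c (h x))"
  unfolding tconf_def using sq_minus_root_pos by (intro Cinf_intros) auto

lemma metric_smooth_positive:
  "Cinf_on Mdom (\<lambda>(u, y). g_uu 1 n r c u) \<and> Cinf_on Mdom (\<lambda>(u, y). g_yy u)
     \<and> (\<forall>u>0. g_uu 1 n r c u > 0 \<and> g_yy u > 0)"
proof (intro conjI allI impI)
  show "Cinf_on Mdom (\<lambda>(u, y). g_uu 1 n r c u)"
  proof (rule Cinf_cong[OF open_Mdom])
    show "Cinf_on Mdom (\<lambda>p. (mu n r c (fst p))\<^sup>2 / (fst p)\<^sup>2)"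
      using open_Mdom by (intro Cinf_intros Cinf_mu Cinf_linear bounded_linear_intros) (auto simp: Mdom_def)
  qed (auto simp: Mdom_def g_uu_eq)
  show "Cinf_on Mdom (\<lambda>(u, y). g_yy u)"
  proof (rule Cinf_cong[OF open_Mdom])
    show "Cinf_on Mdom (\<lambda>p. 1 / (fst p)\<^sup>2)"
      using open_Mdom by (intro Cinf_intros Cinf_linear bounded_linear_intros) (auto simp: Mdom_def)
  qed (auto simp: Mdom_def g_yy_def)
  fix u :: real assume "0 < u"
  then have "mu n r c u \<noteq> 0" using mu_pos by (metis less_irrefl)
  with \<open>0 < u\<close> show "g_uu 1 n r c u > 0" "g_yy u > 0"
    by (simp_all add: g_uu_eq g_yy_def)
qed

lemma tconf_diffeomorphism:
  assumes "0 < m" and bounds: "\<And>u. 0 < u \<Longrightarrow> m * u \<le> tconf n r c u \<and> tconf n r c u \<le> M * u"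
  shows "bij_betw (tconf n r c) {0<..} {0<..} \<and> Cinf_on {0<..} (tconf n r c)
           \<and> Cinf_on {0<..} (inv_into {0<..} (tconf n r c))"
proof (intro conjI)
  let ?t = "tconf n r c"
  note t_deriv = has_real_derivative_tconf[OF roots_neg]
  have "strict_mono_on {0<..} ?t"
  proof (rule strict_mono_onI)
    fix u v :: real assume "u \<in> {0<..}" "u < v"
    show "?t u < ?t v"
    proof (rule DERIV_pos_imp_increasing[OF \<open>u < v\<close>])
      fix x assume "u \<le> x"
      then have "0 < mu n r c x" using mu_pos \<open>u \<in> {0<..}\<close> by simp
      then show "\<exists>y. DERIV ?t x :> y \<and> 0 < y" using t_deriv by blast
    qed
  qed
  moreover have "continuous_on {0<..} ?t"
    using t_deriv by (intro continuous_at_imp_continuous_on) (blast intro: DERIV_isCont)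
  ultimately show bij: "bij_betw ?t {0<..} {0<..}"
    using \<open>0 < m\<close> bounds by (rule bij_betw_pos_reals_if_linearly_bounded)
  show "Cinf_on {0<..} ?t"
    by (intro Cinf_tconf Cinf_linear bounded_linear_intros open_greaterThan)
  show "Cinf_on {0<..} (inv_into {0<..} ?t)"
    using mu_pos
    by (intro Cinf_inv_into[OF open_greaterThan open_greaterThan bij t_deriv] Cinf_mu
        Cinf_linear bounded_linear_intros open_greaterThan) auto
qed

lemma metric_conformal_to_hyperbolic:
  assumes "0 < m" and bounds: "\<And>u. 0 < u \<Longrightarrow> m * u \<le> tconf n r c u \<and> tconf n r c u \<le> M * u"
  shows "\<exists>t \<Phi>. bij_betw t {0<..} {0<..} \<and> Cinf_on {0<..} t
           \<and> Cinf_on {0<..} (inv_into {0<..} t)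
           \<and> Cinf_on Mdom \<Phi> \<and> (\<forall>p\<in>Mdom. \<Phi> p > 0)
           \<and> (\<forall>u y. u > 0 \<longrightarrow>
                 g_uu 1 n r c u = \<Phi> (u, y) * (deriv t u)\<^sup>2 / (t u)\<^sup>2
               \<and> g_yy u = \<Phi> (u, y) / (t u)\<^sup>2)"
proof -
  let ?t = "tconf n r c" and ?\<Phi> = "\<lambda>p. (tconf n r c (fst p) / fst p)\<^sup>2"
  have t_pos: "0 < ?t u" if "0 < u" for u
  proof -
    have "0 < m * u" using \<open>0 < m\<close> that by simp
    also have "\<dots> \<le> ?t u" using bounds[OF that] by simp
    finally show ?thesis .
  qed
  have "Cinf_on Mdom ?\<Phi>"
    using open_Mdom
    by (intro Cinf_intros Cinf_tconf Cinf_linear bounded_linear_intros) (auto simp: Mdom_def)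
  moreover have "\<forall>p\<in>Mdom. ?\<Phi> p > 0"
    by (auto simp: Mdom_def dest: t_pos)
  moreover have "g_uu 1 n r c u = ?\<Phi> (u, y) * (deriv ?t u)\<^sup>2 / (?t u)\<^sup>2
      \<and> g_yy u = ?\<Phi> (u, y) / (?t u)\<^sup>2" if "0 < u" for u y
  proof -
    have "?t u \<noteq> 0" using t_pos[OF that] by simp
    with that show ?thesis
      by (simp add: g_uu_eq g_yy_def DERIV_imp_deriv[OF has_real_derivative_tconf[OF roots_neg]]
          power_divide)
  qed
  ultimately show ?thesis
    using tconf_diffeomorphism[OF assms] by blast
qed

lemma integrals_smooth:
  "Cinf_on TMdom (S1fun 1 n r c \<circ> lift_u) \<and> Cinf_on TMdom (S2fun 1 n r c \<circ> lift_u)"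
proof -
  define A P Q Y where
    "A = (\<lambda>p::real \<times> real \<times> real \<times> real. (fst p)\<^sup>2)" and
    "P = (\<lambda>p::real \<times> real \<times> real \<times> real. fst (snd (snd p)) / (2 * fst p))" and
    "Q = (\<lambda>p::real \<times> real \<times> real \<times> real. snd (snd (snd p)))" and
    "Y = (\<lambda>p::real \<times> real \<times> real \<times> real. fst (snd p))"
  have CA: "Cinf_on TMdom A" and CP: "Cinf_on TMdom P" and CQ: "Cinf_on TMdom Q"
    and CY: "Cinf_on TMdom Y"
    unfolding A_def P_def Q_def Y_def using open_TMdom
    by (intro Cinf_intros Cinf_linear bounded_linear_intros; auto simp: TMdom_def)+
  have A_pos: "\<forall>p\<in>TMdom. 0 < A p" by (auto simp: A_def TMdom_def)
  note smooth = Cinf_Q1fun Cinf_Q2fun Cinf_Gfun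
  note smooth = smooth[OF roots_neg xdot_pos open_TMdom CA A_pos CP CQ]
  have S1: "S1fun 1 n r c \<circ> lift_u
      = (\<lambda>p. Q1fun 1 n r c (A p) (P p) (Q p) + Y p * Gfun 1 n r c (A p) (P p) (Q p))"
    and S2: "S2fun 1 n r c \<circ> lift_u
      = (\<lambda>p. Q2fun 1 n r c (A p) (P p) (Q p) + Y p * Q1fun 1 n r c (A p) (P p) (Q p)
           + (Y p)\<^sup>2 / 2 * Gfun 1 n r c (A p) (P p) (Q p))"
    unfolding A_def P_def Q_def Y_def lift_u_def S1fun_def S2fun_def
    by (simp_all add: fun_eq_iff split_beta)
  show ?thesis
    unfolding S1 S2 using open_TMdom
    by (intro conjI Cinf_add Cinf_mult Cinf_divide Cinf_power Cinf_const smooth CY) simp_all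
qed

lemma globally_defined_if_linearly_bounded:
  assumes "0 < m" and "\<And>u. 0 < u \<Longrightarrow> m * u \<le> tconf n r c u \<and> tconf n r c u \<le> M * u"
  shows "globally_defined 1 n r c"
  unfolding globally_defined_def
  using metric_smooth_positive metric_conformal_to_hyperbolic[OF assms] integrals_smooth by blast

end

section \<open>The positive-part criterion\<close>

lemma sum_divide_bounds:
  fixes c d D :: "'a \<Rightarrow> real"
  assumes "\<And>i. i \<in> A \<Longrightarrow> 0 < d i \<and> d i \<le> D i"
  shows "- (\<Sum>i\<in>A. max (- c i) 0 / d i) \<le> (\<Sum>i\<in>A. c i / D i)
         \<and> (\<Sum>i\<in>A. c i / D i) \<le> (\<Sum>i\<in>A. max (c i) 0 / d i)"
proof
  have lower: "- (max (- c i) 0 / d i) \<le> c i / D i"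
    and upper: "c i / D i \<le> max (c i) 0 / d i" if "i \<in> A" for i
  proof -
    have d: "0 < d i" "d i \<le> D i" using assms[OF that] by auto
    have "- (max (- c i) 0 / d i) \<le> - max (- c i) 0 / D i"
      using d by (simp add: divide_left_mono)
    also have "\<dots> \<le> c i / D i"
      using d by (intro divide_right_mono) simp_all
    finally show "- (max (- c i) 0 / d i) \<le> c i / D i" .
    have "c i / D i \<le> max (c i) 0 / D i"
      using d by (intro divide_right_mono) simp_all
    also have "\<dots> \<le> max (c i) 0 / d i"
      using d by (simp add: divide_left_mono)
    finally show "c i / D i \<le> max (c i) 0 / d i" .
  qed
  have "- (\<Sum>i\<in>A. max (- c i) 0 / d i) = (\<Sum>i\<in>A. - (max (- c i) 0 / d i))"
    by (simp add: sum_negf)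
  also have "\<dots> \<le> (\<Sum>i\<in>A. c i / D i)"
    using lower by (rule sum_mono)
  finally show "- (\<Sum>i\<in>A. max (- c i) 0 / d i) \<le> (\<Sum>i\<in>A. c i / D i)" .
  show "(\<Sum>i\<in>A. c i / D i) \<le> (\<Sum>i\<in>A. max (c i) 0 / d i)"
    using upper by (rule sum_mono)
qed

lemma root_denominator_bounds:
  fixes r u :: real
  assumes "r < 0"
  shows "0 < \<bar>r\<bar> powr (3/2)" and "\<bar>r\<bar> powr (3/2) \<le> (- r) * sqrt (u\<^sup>2 - r)"
    and "(- r) * sqrt (u\<^sup>2 - r) \<le> (u\<^sup>2 - r) * sqrt (u\<^sup>2 - r)"
proof -
  have "\<bar>r\<bar> powr (3/2) = \<bar>r\<bar> powr 1 * \<bar>r\<bar> powr (1/2)"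
    unfolding powr_add[symmetric] by simp
  then have eq: "\<bar>r\<bar> powr (3/2) = (- r) * sqrt (- r)"
    using assms by (simp add: powr_half_sqrt)
  show "0 < \<bar>r\<bar> powr (3/2)" using assms by simp
  show "\<bar>r\<bar> powr (3/2) \<le> (- r) * sqrt (u\<^sup>2 - r)"
    unfolding eq using assms by (intro mult_left_mono) simp_all
  have "r \<le> u\<^sup>2" using assms by (smt (verit) zero_le_power2)
  then show "(- r) * sqrt (u\<^sup>2 - r) \<le> (u\<^sup>2 - r) * sqrt (u\<^sup>2 - r)"
    using assms by (intro mult_right_mono) simp_all
qed

theorem globally_defined_if_sum_pos_part_lt_1:
  assumes roots_neg: "\<forall>i\<in>{1..n}. r i < 0"
    and small: "(\<Sum>i\<in>{1..n}. max (c i) 0 / \<bar>r i\<bar> powr (3/2)) < 1"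
  shows "globally_defined 1 n r c"
proof -
  define Kpos Kneg where
    "Kpos = (\<Sum>i\<in>{1..n}. max (c i) 0 / \<bar>r i\<bar> powr (3/2))" and
    "Kneg = (\<Sum>i\<in>{1..n}. max (- c i) 0 / \<bar>r i\<bar> powr (3/2))"
  note den = root_denominator_bounds[OF roots_neg[rule_format]]
  have mu_pos: "\<forall>u>0. 0 < mu n r c u"
  proof (intro allI impI)
    fix u :: real
    have "(\<Sum>i\<in>{1..n}. c i / ((u\<^sup>2 - r i) * sqrt (u\<^sup>2 - r i))) \<le> Kpos"
      unfolding Kpos_def using den by (intro sum_divide_bounds[THEN conjunct2]) (blast intro: order_trans)
    then show "0 < mu n r c u" using small by (simp add: mu_def Kpos_def)
  qed
  have "(1 - Kpos) * u \<le> tconf n r c u \<and> tconf n r c u \<le> (1 + Kneg) * u" if "0 < u" for u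
  proof -
    have "- Kneg \<le> (\<Sum>i\<in>{1..n}. c i / ((- r i) * sqrt (u\<^sup>2 - r i)))
          \<and> (\<Sum>i\<in>{1..n}. c i / ((- r i) * sqrt (u\<^sup>2 - r i))) \<le> Kpos"
      unfolding Kpos_def Kneg_def using den by (intro sum_divide_bounds) blast
    with \<open>0 < u\<close> show ?thesis
      unfolding tconf_eq_mult by (simp add: mult.commute mult_left_mono)
  qed
  moreover have "0 < 1 - Kpos" using small by (simp add: Kpos_def)
  ultimately show ?thesis
    by (intro globally_defined_if_linearly_bounded[OF roots_neg mu_pos])
qed

lemma sum_pos_part_if_pos:
  fixes \<xi> w :: "nat \<Rightarrow> real"
  assumes "1 \<le> n" and "\<forall>i\<in>{2..n}. \<xi> i > 0"
  shows "(\<Sum>i\<in>{1..n}. max (if i = 1 then 1 else \<xi> i) 0 / w i)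
           = 1 / w 1 + (\<Sum>i\<in>{2..n}. \<xi> i / w i)"
proof -
  have "(\<Sum>i\<in>{2..n}. max (if i = 1 then 1 else \<xi> i) 0 / w i) = (\<Sum>i\<in>{2..n}. \<xi> i / w i)"
    using assms(2) by (intro sum.cong refl) (force simp: max_def)
  then show ?thesis
    using assms(1) by (simp add: sum.atLeast_Suc_atMost numeral_2_eq_2)
qed

lemma sum_pos_part_if_neg:
  fixes \<xi> w :: "nat \<Rightarrow> real"
  assumes "\<forall>i\<in>{2..n}. \<xi> i > 0"
  shows "(\<Sum>i\<in>{1..n}. max (if i = 1 then -1 else - \<xi> i) 0 / w i) = 0"
proof (intro sum.neutral ballI)
  fix i assume "i \<in> {1..n}"
  then have "(if i = 1 then -1 else - \<xi> i) < (0::real)"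
    using assms by (cases "i = 1") force+
  then show "max (if i = 1 then -1 else - \<xi> i) 0 / w i = 0"
    by simp
qed

theorem proposition28:
  fixes n :: nat and r \<xi> :: "nat \<Rightarrow> real"
  assumes "n \<ge> 2"
    and "inj_on r {1..n}"
  shows "((\<forall>i\<in>{2..n}. r i < r 1) \<and> r 1 < -1 \<and> (\<forall>i\<in>{2..n}. \<xi> i > 0)
           \<and> 1 / \<bar>r 1\<bar> powr (3/2) + (\<Sum>i\<in>{2..n}. \<xi> i / \<bar>r i\<bar> powr (3/2)) < 1
          \<longrightarrow> globally_defined 1 n r (\<lambda>i. if i = 1 then 1 else \<xi> i))
       \<and> ((\<forall>i\<in>{2..n}. r i < r 1) \<and> r 1 < 0 \<and> (\<forall>i\<in>{2..n}. \<xi> i > 0)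
          \<longrightarrow> globally_defined 1 n r (\<lambda>i. if i = 1 then -1 else - \<xi> i))"
proof -
  have roots_neg: "\<forall>i\<in>{1..n}. r i < 0" if "\<forall>i\<in>{2..n}. r i < r 1" "r 1 < 0"
  proof -
    have "{1..n} = insert 1 {2..n}" using \<open>n \<ge> 2\<close> by auto
    with that show ?thesis by (auto intro: less_trans)
  qed
  show ?thesis
  proof (intro conjI impI; elim conjE)
    assume H: "\<forall>i\<in>{2..n}. r i < r 1" "r 1 < -1" "\<forall>i\<in>{2..n}. \<xi> i > 0"
      "1 / \<bar>r 1\<bar> powr (3/2) + (\<Sum>i\<in>{2..n}. \<xi> i / \<bar>r i\<bar> powr (3/2)) < 1"
    show "globally_defined 1 n r (\<lambda>i. if i = 1 then 1 else \<xi> i)"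
      using roots_neg[OF H(1)] H(2,4) sum_pos_part_if_pos[OF _ H(3)] \<open>n \<ge> 2\<close>
      by (intro globally_defined_if_sum_pos_part_lt_1) simp_all
  next
    assume H: "\<forall>i\<in>{2..n}. r i < r 1" "r 1 < 0" "\<forall>i\<in>{2..n}. \<xi> i > 0"
    show "globally_defined 1 n r (\<lambda>i. if i = 1 then -1 else - \<xi> i)"
      using roots_neg[OF H(1,2)] sum_pos_part_if_neg[OF H(3)]
      by (intro globally_defined_if_sum_pos_part_lt_1) simp_all
  qed
qed

end
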